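(* Let $1,2,3$ be three distinct vertices of $G$ such that the induced subgraph $G[\{1,2,3\}]$ has edge set exactly $\{12,13,23\}$, and suppose $w_{12}\le w_{13}\le w_{23}$. If the matching game $\Gamma_G$ is population monotonic, then $w_{23}\ge w_{12}+w_{13}$.
   Context: $G=(V,E;w)$ is a finite simple graph with edge weights $w:E\to\mathbb{R}$, $w_e>0$ for all $e\in E$; $w_{ij}$ denotes the weight of edge $ij$. The matching game on $G$ is the cooperative game $\Gamma_G=(N,\gamma)$ with player set $N=V$ and, for $S\subseteq N$, $\gamma(S)$ equal to the maximum weight of a matching in the induced subgraph $G[S]$ (so $\gamma(\emptyset)=0$). A population monotonic allocation scheme (PMAS) is a family $(\boldsymbol{x}_S)_{\emptyset\neq S\subseteq N}$ with $\boldsymbol{x}_S=(x_{S,i})_{i\in S}\in\mathbb{R}^S$ such that (efficiency) $\sum_{i\in S}x_{S,i}=\gamma(S)$ for every nonempty $S\subseteq N$, and (monotonicity) $x_{S,i}\le x_{T,i}$ whenever $\emptyset\ne S\subseteq T\subseteq N$ and $i\in S$. $\Gamma_G$ is called population monotonic if it admits a PMAS. *)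

theory Defs
  imports Complex_Main "HOL-Library.Disjoint_Sets"
begin

definition simple_graph :: "'a set \<Rightarrow> 'a set set \<Rightarrow> bool" where
  "simple_graph V E \<longleftrightarrow> finite V \<and> (\<forall>e\<in>E. e \<subseteq> V \<and> card e = 2)"

definition induced_edges :: "'a set set \<Rightarrow> 'a set \<Rightarrow> 'a set set" where
  "induced_edges E S = {e \<in> E. e \<subseteq> S}"

definition matchings :: "'a set set \<Rightarrow> 'a set \<Rightarrow> 'a set set set" where
  "matchings E S = {M. M \<subseteq> induced_edges E S \<and> disjoint M}"

definition gamma :: "'a set set \<Rightarrow> ('a set \<Rightarrow> real) \<Rightarrow> 'a set \<Rightarrow> real" where
  "gamma E w S = Max ((\<lambda>M. \<Sum>e\<in>M. w e) ` matchings E S)"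

text \<open>Population monotonic allocation scheme; x S i is the payoff of player i in coalition S.\<close>
definition is_PMAS :: "'a set \<Rightarrow> 'a set set \<Rightarrow> ('a set \<Rightarrow> real) \<Rightarrow> ('a set \<Rightarrow> 'a \<Rightarrow> real) \<Rightarrow> bool" where
  "is_PMAS V E w x \<longleftrightarrow>
     (\<forall>S. S \<subseteq> V \<and> S \<noteq> {} \<longrightarrow> (\<Sum>i\<in>S. x S i) = gamma E w S) \<and>
     (\<forall>S T i. S \<noteq> {} \<and> S \<subseteq> T \<and> T \<subseteq> V \<and> i \<in> S \<longrightarrow> x S i \<le> x T i)"

definition population_monotonic :: "'a set \<Rightarrow> 'a set set \<Rightarrow> ('a set \<Rightarrow> real) \<Rightarrow> bool" where
  "population_monotonic V E w \<longleftrightarrow> (\<exists>x. is_PMAS V E w x)"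

end

theory Submission
  imports Defs
begin

text \<open>On a triangle every matching has at most one edge, so \<open>\<gamma>\<close> of a
  pair is its edge weight and \<open>\<gamma>(T) = w\<^sub>2\<^sub>3\<close> for \<open>T = {1,2,3}\<close>.
  Monotonicity from \<open>{2,3}\<close> to \<open>T\<close> forces \<open>x\<^sub>T(1) \<le> 0\<close>, while the chain
  \<open>{1} \<subseteq> {1,2} \<subseteq> T\<close> gives \<open>x\<^sub>T(1) \<ge> 0\<close>; hence player 1 receives \<open>0\<close> in \<open>T\<close>,
  at most \<open>0\<close> in \<open>{1,3}\<close>, and players 2 and 3 must be paid at least
  \<open>w\<^sub>1\<^sub>2 + w\<^sub>1\<^sub>3\<close> out of \<open>w\<^sub>2\<^sub>3\<close>.\<close>

lemma induced_edges_subset: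
  "S \<subseteq> T \<Longrightarrow> induced_edges E S = {e \<in> induced_edges E T. e \<subseteq> S}"
  unfolding induced_edges_def by auto

lemma matchings_pairwise_intersecting:
  assumes "\<forall>e\<in>induced_edges E S. \<forall>f\<in>induced_edges E S. e \<inter> f \<noteq> {}"
  shows "matchings E S = insert {} ((\<lambda>e. {e}) ` induced_edges E S)"
proof (intro equalityI subsetI)
  fix M assume M: "M \<in> matchings E S"
  then have sub: "M \<subseteq> induced_edges E S" and dj: "disjoint M"
    unfolding matchings_def by auto
  have "e = f" if "e \<in> M" "f \<in> M" for e f
    using disjointD[OF dj that] assms sub that by blast
  then have "M = {} \<or> (\<exists>e\<in>M. M = {e})" by blast
  then show "M \<in> insert {} ((\<lambda>e. {e}) ` induced_edges E S)" using sub by auto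
qed (auto simp: matchings_def disjoint_def)

lemma gamma_pairwise_intersecting:
  assumes "\<forall>e\<in>induced_edges E S. \<forall>f\<in>induced_edges E S. e \<inter> f \<noteq> {}"
  shows "gamma E w S = Max (insert 0 (w ` induced_edges E S))"
proof -
  have "(\<lambda>M. \<Sum>e\<in>M. w e) ` matchings E S = insert 0 (w ` induced_edges E S)"
    unfolding matchings_pairwise_intersecting[OF assms] by (auto simp: image_image)
  then show ?thesis unfolding gamma_def by simp
qed

lemma PMAS_triangle_inequality:
  assumes x: "is_PMAS V E w x"
    and V: "{a, b, c} \<subseteq> V" and distinct: "a \<noteq> b" "a \<noteq> c" "b \<noteq> c"
    and "gamma E w {a} = 0"
    and "gamma E w {a, b} = p" "gamma E w {a, c} = q" "gamma E w {b, c} = r"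
    and "gamma E w {a, b, c} = r"
  shows "p + q \<le> r"
proof -
  let ?T = "{a, b, c}"
  have eff: "\<And>S. S \<subseteq> V \<Longrightarrow> S \<noteq> {} \<Longrightarrow> (\<Sum>i\<in>S. x S i) = gamma E w S"
    and mon: "\<And>S T i. S \<noteq> {} \<Longrightarrow> S \<subseteq> T \<Longrightarrow> T \<subseteq> V \<Longrightarrow> i \<in> S \<Longrightarrow> x S i \<le> x T i"
    using x unfolding is_PMAS_def by blast+
  have "x {a} a = 0" "x {a, b} a + x {a, b} b = p" "x {a, c} a + x {a, c} c = q"
    "x {b, c} b + x {b, c} c = r" "x ?T a + x ?T b + x ?T c = r"
    using eff[of "{a}"] eff[of "{a, b}"] eff[of "{a, c}"] eff[of "{b, c}"] eff[of ?T]
      V distinct assms(6-10) by simp_all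
  moreover have "x {a} a \<le> x {a, b} a"
    by (rule mon) (use V in auto)
  moreover have "x {a, b} a \<le> x ?T a" "x {a, b} b \<le> x ?T b"
    "x {a, c} a \<le> x ?T a" "x {a, c} c \<le> x ?T c"
    "x {b, c} b \<le> x ?T b" "x {b, c} c \<le> x ?T c"
    by (rule mon[OF _ _ V]; auto)+
  ultimately show ?thesis by linarith
qed

theorem mainTheorem1:
  fixes V :: "'a set" and E :: "'a set set" and w :: "'a set \<Rightarrow> real"
    and v1 v2 v3 :: 'a
  assumes "simple_graph V E"
    and "\<forall>e\<in>E. w e > 0"
    and "v1 \<in> V" "v2 \<in> V" "v3 \<in> V"
    and "v1 \<noteq> v2" "v1 \<noteq> v3" "v2 \<noteq> v3"
    and "induced_edges E {v1, v2, v3} = {{v1, v2}, {v1, v3}, {v2, v3}}"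
    and "w {v1, v2} \<le> w {v1, v3}" "w {v1, v3} \<le> w {v2, v3}"
    and "population_monotonic V E w"
  shows "w {v2, v3} \<ge> w {v1, v2} + w {v1, v3}"
proof -
  note distinct = assms(6-8) and triangle = assms(9)
  obtain x where x: "is_PMAS V E w x"
    using assms(12) unfolding population_monotonic_def by blast
  have pos: "w {v1, v2} > 0" "w {v1, v3} > 0" "w {v2, v3} > 0"
    using triangle assms(2) unfolding induced_edges_def by blast+
  have edges: "induced_edges E {v1} = {}" "induced_edges E {v1, v2} = {{v1, v2}}"
    "induced_edges E {v1, v3} = {{v1, v3}}" "induced_edges E {v2, v3} = {{v2, v3}}"
    using induced_edges_subset[of _ "{v1, v2, v3}" E] triangle distinct
    by (auto simp: doubleton_eq_iff)
  have "gamma E w {v1} = 0" "gamma E w {v1, v2} = w {v1, v2}"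
    "gamma E w {v1, v3} = w {v1, v3}" "gamma E w {v2, v3} = w {v2, v3}"
    using pos by (simp_all add: gamma_pairwise_intersecting edges)
  moreover have "gamma E w {v1, v2, v3} = w {v2, v3}"
    using pos assms(10,11) by (subst gamma_pairwise_intersecting) (auto simp: triangle)
  ultimately show ?thesis
    using PMAS_triangle_inequality[OF x _ distinct] assms(3-5) by simp
qed

end
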